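(* Let $n\ge1$, $L>0$, and let $\beta:\mathbb R\to\mathbb R$ be non-decreasing. Define, for $U$ in $$D(A)=\Big\{U\in L^\infty(0,L):\ \kappa_n(s)\frac{d^2U}{ds^2}\in L^\infty(0,L),\ \frac{dU}{ds}(L)=0,\ U(0)=0\Big\},$$ the operator $AU=\kappa_n(s)\,\beta\big(-\kappa_n(s)\frac{d^2U}{ds^2}\big)$. Then for all $U,V\in D(A)$ and $\lambda>0$, $$\big\|(U-V)_+\big\|_{L^\infty(0,L)}\le\big\|\big(U-V+\lambda(AU-AV)\big)_+\big\|_{L^\infty(0,L)}.$$
   Context: $\kappa_n(s)=n\omega_n^{1/n}s^{1/n'}$ with $n'=n/(n-1)$ and $\omega_n$ the volume of the unit ball of $\mathbb R^n$; $(\cdot)_+$ denotes the positive part. *)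

theory Defs
  imports "HOL-Analysis.Analysis" "HOL-Probability.Essential_Supremum"
begin

text \<open>kappa_n(s) = n omega_n^(1/n) s^(1/n'), with 1/n' = (n-1)/n and omega_n the
  volume of the unit ball of R^n (library: unit_ball_vol).\<close>
definition kappa :: "nat \<Rightarrow> real \<Rightarrow> real" where
  "kappa n s = real n * unit_ball_vol (real n) powr (1 / real n) * s powr ((real n - 1) / real n)"

text \<open>Membership of U in D(A), witnessed by its first derivative U1 and its
  (weak) second derivative U2:
  U continuous on [0,L] (so U is in L-infinity and the trace U(0) makes sense), U(0) = 0,
  U differentiable on (0,L] with derivative U1 (one-sided at L), U1(L) = 0,
  U1 absolutely continuous on every [s,L], s>0, with a.e. derivative U2
  (U1 t - U1 s = integral of U2 over [s,t]), and kappa_n U2 in L-infinity(0,L).\<close>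
definition domA :: "nat \<Rightarrow> real \<Rightarrow> (real \<Rightarrow> real) \<Rightarrow> (real \<Rightarrow> real) \<Rightarrow> (real \<Rightarrow> real) \<Rightarrow> bool" where
  "domA n L U U1 U2 \<longleftrightarrow>
     continuous_on {0..L} U \<and> U 0 = 0 \<and>
     (\<forall>s\<in>{0<..L}. (U has_real_derivative U1 s) (at s within {0..L})) \<and>
     U1 L = 0 \<and>
     (\<forall>s t. 0 < s \<longrightarrow> s \<le> t \<longrightarrow> t \<le> L \<longrightarrow> (U2 has_integral (U1 t - U1 s)) {s..t}) \<and>
     (\<exists>C. AE s in restrict_space lebesgue {0<..<L}. \<bar>kappa n s * U2 s\<bar> \<le> C)"

definition opA :: "nat \<Rightarrow> (real \<Rightarrow> real) \<Rightarrow> (real \<Rightarrow> real) \<Rightarrow> real \<Rightarrow> real" where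
  "opA n \<beta> U2 s = kappa n s * \<beta> (- kappa n s * U2 s)"

definition Linf_pos :: "real \<Rightarrow> (real \<Rightarrow> real) \<Rightarrow> ereal" where
  "Linf_pos L f = esssup (restrict_space lebesgue {0<..<L}) (\<lambda>s. ereal (max 0 (f s)))"

end

theory Submission
  imports Defs
begin

text \<open>Let W = U - V. It is continuous on [0,L] with W(0) = 0, so it attains its maximum at
  some s0, and it suffices to show W(s0) \<le> c for every c \<ge> 0 bounding
  W + lam (AU - AV) a.e. If W(s0) > c, then s0 > 0, and on the superlevel set {W > c},
  which contains an interval [a,s0], we get AU < AV a.e.; since beta is non-decreasing
  and kappa_n > 0 this means W'' > 0 a.e. there. So W' increases strictly on [a,s0] up to
  W'(s0) = 0 (Fermat's rule for s0 < L, the Neumann condition for s0 = L), hence W' < 0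
  on (a,s0) and W(a) > W(s0), contradicting maximality.\<close>

lemma has_integral_pos_if_AE_pos:
  fixes f :: "real \<Rightarrow> real"
  assumes f: "(f has_integral I) {a..b}" and "a < b"
    and pos: "AE x in lebesgue. x \<in> {a<..<b} \<longrightarrow> 0 < f x"
  shows "0 < I"
proof -
  define g where "g x = (if x \<in> {a..b} then max 0 (f x) else 0)" for x
  obtain N where N: "N \<in> null_sets lebesgue" "\<And>x. x \<in> {a<..<b} \<Longrightarrow> x \<notin> N \<Longrightarrow> 0 < f x"
    using pos by (auto elim!: AE_E3)
  have "negligible (N \<union> {a, b})"
    using N(1) by (simp add: negligible_iff_null_sets)
  then have "((\<lambda>x. max 0 (f x)) has_integral I) {a..b}"
    by (rule has_integral_spike[OF _ _ f]) (use N(2) in force)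
  then have "(g has_integral I) UNIV"
    unfolding g_def has_integral_restrict_UNIV .
  then have g: "g \<in> borel_measurable lebesgue" "integral\<^sup>N lebesgue g = ennreal I" "0 \<le> I"
    using has_integral_iff_nn_integral_lebesgue[of g] by (auto simp: g_def)
  show ?thesis
  proof (rule ccontr)
    assume "\<not> 0 < I"
    with g have "AE x in lebesgue. ennreal (g x) = 0"
      by (simp add: nn_integral_0_iff_AE)
    then have "AE x in lebesgue. x \<notin> {a<..<b}"
      using pos by eventually_elim (auto simp: g_def)
    then have "{a<..<b} \<in> null_sets lebesgue"
      by (simp add: AE_iff_null_sets)
    with \<open>a < b\<close> show False by (auto dest: null_setsD1)
  qed
qed

lemma strict_mono_on_if_has_integral_AE_pos:
  fixes f F :: "real \<Rightarrow> real"
  assumes F: "\<And>s t. a \<le> s \<Longrightarrow> s \<le> t \<Longrightarrow> t \<le> b \<Longrightarrow> (f has_integral (F t - F s)) {s..t}"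
    and pos: "AE x in lebesgue. x \<in> {a<..<b} \<longrightarrow> 0 < f x"
  shows "strict_mono_on {a..b} F"
proof (rule strict_mono_onI)
  fix s t assume st: "s \<in> {a..b}" "t \<in> {a..b}" "s < t"
  have "AE x in lebesgue. x \<in> {s<..<t} \<longrightarrow> 0 < f x"
    using pos by eventually_elim (use st in auto)
  then have "0 < F t - F s"
    using F st by (intro has_integral_pos_if_AE_pos) auto
  then show "F s < F t" by simp
qed

lemma diff_less_mult_deriv_if_strict_mono_on:
  fixes f f' :: "real \<Rightarrow> real"
  assumes "a < b" and "continuous_on {a..b} f"
    and "\<And>x. a < x \<Longrightarrow> x < b \<Longrightarrow> (f has_real_derivative f' x) (at x)"
    and mono: "strict_mono_on {a..b} f'"
  shows "f b - f a < (b - a) * f' b"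
proof -
  obtain z where z: "a < z" "z < b" "f b - f a = f' z * (b - a)"
    by (rule mvt[of a b f "\<lambda>x h. f' x * h"]) (use assms in \<open>auto simp: has_field_derivative_def\<close>)
  have "f' z < f' b"
    using z by (intro strict_mono_onD[OF mono]) auto
  with z \<open>a < b\<close> show ?thesis by simp
qed

lemma max_le_level_if_convex_above:
  fixes f f' f'' :: "real \<Rightarrow> real"
  assumes cont: "continuous_on {0..L} f"
    and deriv: "\<And>s. s \<in> {0<..L} \<Longrightarrow> (f has_real_derivative f' s) (at s within {0..L})"
    and f'_L: "f' L = 0"
    and second_deriv: "\<And>s t. 0 < s \<Longrightarrow> s \<le> t \<Longrightarrow> t \<le> L \<Longrightarrow> (f'' has_integral (f' t - f' s)) {s..t}"
    and s0: "s0 \<in> {0<..L}" and max: "\<And>x. x \<in> {0..L} \<Longrightarrow> f x \<le> f s0"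
    and convex: "AE x in lebesgue. x \<in> {0<..<L} \<longrightarrow> c < f x \<longrightarrow> 0 < f'' x"
  shows "f s0 \<le> c"
proof (rule ccontr)
  assume "\<not> f s0 \<le> c"
  then have "0 < f s0 - c" by simp
  moreover have "s0 \<in> {0..L}" using s0 by simp
  ultimately obtain d where "0 < d"
    and d: "\<And>x. x \<in> {0..L} \<Longrightarrow> dist x s0 < d \<Longrightarrow> dist (f x) (f s0) < f s0 - c"
    using cont unfolding continuous_on_iff by blast
  define a where "a = max (s0 - d / 2) (s0 / 2)"
  have a: "0 < a" "a < s0" using s0 \<open>0 < d\<close> by (auto simp: a_def)
  have above: "c < f x" if "x \<in> {a..s0}" for x
    using d[of x] that a s0 by (auto simp: a_def dist_real_def)
  have deriv_at: "(f has_real_derivative f' x) (at x)" if "0 < x" "x < L" for x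
  proof -
    have "at x within {0..L} = at x" using that by (intro at_within_interior) auto
    then show ?thesis using deriv[of x] that by simp
  qed
  have "f' s0 = 0"
  proof (cases "s0 = L")
    case False
    with s0 have "0 < min s0 (L - s0)" by simp
    moreover have "\<forall>y. \<bar>s0 - y\<bar> < min s0 (L - s0) \<longrightarrow> f y \<le> f s0"
      using max by (auto simp: abs_less_iff)
    ultimately show ?thesis
      using False s0 by (intro DERIV_local_max[OF deriv_at, where d = "min s0 (L - s0)"]) auto
  qed (use f'_L in simp)
  moreover have "strict_mono_on {a..s0} f'"
  proof (rule strict_mono_on_if_has_integral_AE_pos)
    show "AE x in lebesgue. x \<in> {a<..<s0} \<longrightarrow> 0 < f'' x"
      using convex by eventually_elim (use a s0 above in auto)
  qed (use second_deriv a s0 in auto)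
  moreover have "continuous_on {a..s0} f"
    using cont by (rule continuous_on_subset) (use a s0 in auto)
  ultimately have "f s0 - f a < 0"
    using diff_less_mult_deriv_if_strict_mono_on[of a s0 f f'] a s0 deriv_at by simp
  with max[of a] a s0 show False by simp
qed

lemma kappa_pos: "1 \<le> n \<Longrightarrow> 0 < s \<Longrightarrow> 0 < kappa n s"
  unfolding kappa_def by (intro mult_pos_pos) (simp_all add: less_imp_neq[symmetric])

lemma opA_less_imp_less:
  assumes "1 \<le> n" and "0 < s" and "mono \<beta>" and "opA n \<beta> U2 s < opA n \<beta> V2 s"
  shows "V2 s < U2 s"
proof -
  have k: "0 < kappa n s" using assms(1,2) by (rule kappa_pos)
  with assms(4) have "\<beta> (- kappa n s * U2 s) < \<beta> (- kappa n s * V2 s)"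
    unfolding opA_def by simp
  then have "- kappa n s * U2 s < - kappa n s * V2 s"
    using \<open>mono \<beta>\<close> by (meson monoD not_le)
  with k show ?thesis by simp
qed

lemma domA_diff:
  assumes "domA n L U U1 U2" and "domA n L V V1 V2"
  shows "domA n L (\<lambda>s. U s - V s) (\<lambda>s. U1 s - V1 s) (\<lambda>s. U2 s - V2 s)"
proof -
  obtain CU CV where
      "AE s in restrict_space lebesgue {0<..<L}. \<bar>kappa n s * U2 s\<bar> \<le> CU"
      "AE s in restrict_space lebesgue {0<..<L}. \<bar>kappa n s * V2 s\<bar> \<le> CV"
    using assms unfolding domA_def by blast
  then have "AE s in restrict_space lebesgue {0<..<L}. \<bar>kappa n s * (U2 s - V2 s)\<bar> \<le> CU + CV"
    by eventually_elim (metis abs_triangle_ineq4 add_mono order_trans right_diff_distrib)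
  moreover have "((\<lambda>x. U2 x - V2 x) has_integral (U1 t - V1 t - (U1 s - V1 s))) {s..t}"
    if "0 < s" "s \<le> t" "t \<le> L" for s t
    using has_integral_diff[of U2 "U1 t - U1 s" "{s..t}" V2 "V1 t - V1 s"] assms that
    by (simp add: domA_def algebra_simps)
  ultimately show ?thesis
    using assms unfolding domA_def by (auto intro!: continuous_on_diff DERIV_diff)
qed

lemma Linf_pos_nonneg:
  assumes "0 < L"
  shows "0 \<le> Linf_pos L f"
proof -
  let ?M = "restrict_space lebesgue {0<..<L}"
  have "emeasure ?M (space ?M) \<noteq> 0"
    using assms by (simp add: emeasure_restrict_space space_restrict_space)
  then have "0 = esssup ?M (\<lambda>_. ereal 0)"
    by (simp add: esssup_const)
  also have "\<dots> \<le> Linf_pos L f"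
    unfolding Linf_pos_def by (rule esssup_mono) (auto simp del: ereal_max)
  finally show ?thesis .
qed

lemma Linf_pos_le_AE:
  assumes "Linf_pos L f \<le> ereal c"
  shows "AE x in lebesgue. x \<in> {0<..<L} \<longrightarrow> f x \<le> c"
proof -
  have "AE x in restrict_space lebesgue {0<..<L}. ereal (max 0 (f x)) \<le> Linf_pos L f"
    unfolding Linf_pos_def by (rule esssup_AE)
  then have "AE x in lebesgue. x \<in> {0<..<L} \<longrightarrow> ereal (max 0 (f x)) \<le> Linf_pos L f"
    by (subst (asm) AE_restrict_space_iff) auto
  then show ?thesis
    by eventually_elim (use assms in \<open>force simp del: ereal_max dest: order_trans\<close>)
qed

lemma Linf_pos_le:
  assumes "continuous_on {0<..<L} f" and "\<And>x. x \<in> {0<..<L} \<Longrightarrow> f x \<le> c"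
  shows "Linf_pos L f \<le> ereal (max 0 c)"
  unfolding Linf_pos_def
proof (rule esssup_I)
  have "continuous_on {0<..<L} (\<lambda>s. max 0 (f s))"
    using assms(1) by (intro continuous_on_max continuous_on_const)
  then show "(\<lambda>s. ereal (max 0 (f s))) \<in> borel_measurable (restrict_space lebesgue {0<..<L})"
    by (intro borel_measurable_ereal continuous_imp_measurable_on_sets_lebesgue) auto
  show "AE x in restrict_space lebesgue {0<..<L}. ereal (max 0 (f x)) \<le> ereal (max 0 c)"
  proof (rule AE_I2)
    fix x assume "x \<in> space (restrict_space lebesgue {0<..<L})"
    then have "f x \<le> c" using assms(2) by (simp add: space_restrict_space)
    then have "max 0 (f x) \<le> max 0 c" by (rule max.mono[OF order_refl])
    then show "ereal (max 0 (f x)) \<le> ereal (max 0 c)" by (simp only: ereal_less_eq)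
  qed
qed

lemma domA_max_le_level:
  assumes W: "domA n L W W' W''" and s0: "s0 \<in> {0..L}"
    and max: "\<And>x. x \<in> {0..L} \<Longrightarrow> W x \<le> W s0" and "0 \<le> c"
    and convex: "AE x in lebesgue. x \<in> {0<..<L} \<longrightarrow> c < W x \<longrightarrow> 0 < W'' x"
  shows "W s0 \<le> c"
proof (cases "s0 = 0")
  case True
  with W \<open>0 \<le> c\<close> show ?thesis by (simp add: domA_def)
next
  case False
  with s0 have s0_pos: "s0 \<in> {0<..L}" by simp
  from W have "continuous_on {0..L} W"
    and "\<And>s. s \<in> {0<..L} \<Longrightarrow> (W has_real_derivative W' s) (at s within {0..L})"
    and "W' L = 0"
    and "\<And>s t. 0 < s \<Longrightarrow> s \<le> t \<Longrightarrow> t \<le> L \<Longrightarrow> (W'' has_integral (W' t - W' s)) {s..t}"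
    unfolding domA_def by auto
  then show ?thesis
    using s0_pos max convex by (rule max_le_level_if_convex_above)
qed

lemma Linf_pos_resolvent_le_imp_convex_above:
  assumes "1 \<le> n" and "mono \<beta>" and "0 < lam"
    and "Linf_pos L (\<lambda>s. W s + lam * (opA n \<beta> U2 s - opA n \<beta> V2 s)) \<le> ereal c"
  shows "AE x in lebesgue. x \<in> {0<..<L} \<longrightarrow> c < W x \<longrightarrow> 0 < U2 x - V2 x"
  using Linf_pos_le_AE[OF assms(4)]
proof eventually_elim
  case (elim x)
  show ?case
  proof (intro impI)
    assume x: "x \<in> {0<..<L}" "c < W x"
    with elim have "lam * (opA n \<beta> U2 x - opA n \<beta> V2 x) < 0" by simp
    with \<open>0 < lam\<close> have "opA n \<beta> U2 x < opA n \<beta> V2 x"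
      by (simp add: mult_less_0_iff)
    moreover have "0 < x" using x by simp
    ultimately have "V2 x < U2 x"
      using opA_less_imp_less assms(1,2) by blast
    then show "0 < U2 x - V2 x" by simp
  qed
qed

theorem lemma2:
  fixes n :: nat and L lam :: real and \<beta> :: "real \<Rightarrow> real"
    and U U1 U2 V V1 V2 :: "real \<Rightarrow> real"
  assumes "n \<ge> 1" and "L > 0" and "mono \<beta>"
    and "domA n L U U1 U2" and "domA n L V V1 V2"
    and "lam > 0"
  shows "Linf_pos L (\<lambda>s. U s - V s)
           \<le> Linf_pos L (\<lambda>s. U s - V s + lam * (opA n \<beta> U2 s - opA n \<beta> V2 s))"
proof -
  define W where "W = (\<lambda>s. U s - V s)"
  define R where "R = Linf_pos L (\<lambda>s. W s + lam * (opA n \<beta> U2 s - opA n \<beta> V2 s))"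
  have W: "domA n L W (\<lambda>s. U1 s - V1 s) (\<lambda>s. U2 s - V2 s)"
    unfolding W_def using assms(4,5) by (rule domA_diff)
  then have cont: "continuous_on {0..L} W" by (simp add: domA_def)
  obtain s0 where s0: "s0 \<in> {0..L}" and max: "\<And>x. x \<in> {0..L} \<Longrightarrow> W x \<le> W s0"
    using continuous_attains_sup[OF compact_Icc _ cont] assms(2) by auto
  have "continuous_on {0<..<L} W"
    using cont by (rule continuous_on_subset) auto
  then have "Linf_pos L W \<le> ereal (max 0 (W s0))"
    by (rule Linf_pos_le) (use max in auto)
  also have "\<dots> \<le> R"
  proof (rule ereal_le_real)
    fix c assume R: "R \<le> ereal c"
    have "0 \<le> ereal c"
      using Linf_pos_nonneg[OF assms(2)] R unfolding R_def by (rule order_trans)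
    then have "0 \<le> c" by simp
    moreover have "W s0 \<le> c"
      using W s0 max \<open>0 \<le> c\<close> Linf_pos_resolvent_le_imp_convex_above[OF assms(1,3,6) R[unfolded R_def]]
      by (rule domA_max_le_level)
    ultimately show "ereal (max 0 (W s0)) \<le> ereal c" by simp
  qed
  finally show ?thesis unfolding W_def R_def .
qed

end
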